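(* Let $\Sigma_1,\dots,\Sigma_m$ be disjoint subsets of $\mathbb C$, $\mathcal H=L^2(\Sigma_1\cup\cdots\cup\Sigma_m,\mu)$ for a measure $\mu$; let $\Sigma'_1,\dots,\Sigma'_m$ be disjoint subsets of $\mathbb C$ and $\mathcal H'=L^2(\Sigma'_1\cup\cdots\cup\Sigma'_m,\mu')$ for a measure $\mu'$. Let $A:\mathcal H'\to\mathcal H$ and $B:\mathcal H\to\mathcal H'$ be operators given by kernels such that $A(w,w')=0$ unless there is $i$ with $w\in\Sigma_{2i-1}\cup\Sigma_{2i}$ and $w'\in\Sigma'_{2i-1}\cup\Sigma'_{2i}$, and $B(w',w)=0$ unless there is $i$ with $w'\in\Sigma'_{2i}\cup\Sigma'_{2i+1}$ and $w\in\Sigma_{2i}\cup\Sigma_{2i+1}$. Let $\lambda,\mu$ be complex-valued functions on $\Sigma_1\cup\cdots\cup\Sigma_m$ and $\lambda',\mu'$ complex-valued functions on $\Sigma'_1\cup\cdots\cup\Sigma'_m$ such that $\lambda(w)\mu(w)\lambda'(w')\mu'(w')=1$ for every $(w,w')\in\Sigma_i\times\Sigma'_i$, $1\le i\le m$. Assume $\det(I-AB)$ is well defined and equal to its usual Fredholm series expansion. Then $\det(I-(\lambda A\lambda')(\mu'B\mu))$ is also well defined by the usual Fredholm series expansion and $$\det(I-AB)=\det(I-(\lambda A\lambda')(\mu'B\mu)).$$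
   Context: $\lambda A\lambda'$ denotes the operator with kernel $\lambda(w)A(w,w')\lambda'(w')$, and $\mu'B\mu$ the operator with kernel $\mu'(w')B(w',w)\mu(w)$. *)

theory Defs
  imports "HOL-Analysis.Analysis" "Jordan_Normal_Form.Determinant"
begin

definition blk :: "(nat \<Rightarrow> complex set) \<Rightarrow> nat \<Rightarrow> nat set \<Rightarrow> complex set" where
  "blk S m J = (\<Union>j\<in>J \<inter> {1..m}. S j)"

text \<open>Kernel of the composition AB of integral operators A : L2(M') -> L2(M),
  B : L2(M) -> L2(M') given by kernels A(w,w'), B(w',w).\<close>
definition kcomp :: "complex measure \<Rightarrow> (complex \<Rightarrow> complex \<Rightarrow> complex)
    \<Rightarrow> (complex \<Rightarrow> complex \<Rightarrow> complex) \<Rightarrow> complex \<Rightarrow> complex \<Rightarrow> complex" where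
  "kcomp M' A B = (\<lambda>w v. \<integral>w'. A w w' * B w' v \<partial>M')"

definition fred_integrand :: "(complex \<Rightarrow> complex \<Rightarrow> complex) \<Rightarrow> nat \<Rightarrow> (nat \<Rightarrow> complex) \<Rightarrow> complex" where
  "fred_integrand K n x = Determinant.det (mat n n (\<lambda>(i,j). K (x i) (x j)))"

definition fred_term :: "complex measure \<Rightarrow> (complex \<Rightarrow> complex \<Rightarrow> complex) \<Rightarrow> nat \<Rightarrow> complex" where
  "fred_term M K n = ((-1) ^ n / of_nat (fact n)) *
     (\<integral>x. fred_integrand K n x \<partial>(PiM {..<n} (\<lambda>_. M)))"

definition fred_welldef :: "complex measure \<Rightarrow> (complex \<Rightarrow> complex \<Rightarrow> complex) \<Rightarrow> bool" where
  "fred_welldef M K \<longleftrightarrow>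
     (\<forall>n. integrable (PiM {..<n} (\<lambda>_. M)) (fred_integrand K n)) \<and> summable (fred_term M K)"

definition fred_det :: "complex measure \<Rightarrow> (complex \<Rightarrow> complex \<Rightarrow> complex) \<Rightarrow> complex" where
  "fred_det M K = (\<Sum>n. fred_term M K n)"

end

theory Submission
  imports Defs
begin

text \<open>Expand both Fredholm terms by the Leibniz formula and compare, for each permutation \<open>p\<close>,
  the products \<open>\<Prod>\<^sub>i K(x\<^sub>i, x\<^sub>p\<^sub>i)\<close>. The entry of the kernel of \<open>AB\<close> at \<open>(x\<^sub>i, x\<^sub>p\<^sub>i)\<close> only
  receives contributions from intermediate points in a single block \<open>\<Sigma>'\<^sub>b\<^sub>i\<close>: \<open>b\<^sub>i\<close> shares the
  pair \<open>{2k-1, 2k}\<close> with the block \<open>a\<^sub>i\<close> of \<open>x\<^sub>i\<close> and the pair \<open>{2l, 2l+1}\<close> with \<open>a\<^sub>p\<^sub>i\<close>,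
  and these two pairs determine \<open>b\<^sub>i\<close>. As \<open>\<lambda>'\<mu>'\<close> takes a constant value \<open>c\<^sub>j\<close> on \<open>\<Sigma>'\<^sub>j\<close>,
  the rescaled entry is \<open>\<lambda>(x\<^sub>i) \<mu>(x\<^sub>p\<^sub>i) c\<^sub>b\<^sub>i\<close> times the old one. Counting indices below each
  threshold shows that \<open>b\<close> and \<open>a\<close> take every value equally often, so these factors cancel
  because \<open>\<lambda>(x) \<mu>(x) c\<^sub>a = 1\<close> for \<open>x \<in> \<Sigma>\<^sub>a\<close>.\<close>

lemma nat_multiset_eqI_by_thresholds:
  fixes X Y :: "nat multiset"
  assumes "\<And>h. size {#x \<in># X. x < h#} = size {#x \<in># Y. x < h#}"
  shows "X = Y"
proof (rule multiset_eqI)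
  fix k
  have split: "size {#x \<in># Z. x < Suc k#} = size {#x \<in># Z. x < k#} + count Z k"
    for Z :: "nat multiset"
  proof -
    have "{#x \<in># Z. x < Suc k#} = {#x \<in># Z. x < k#} + {#x \<in># Z. x = k#}"
      by (induction Z) auto
    then show ?thesis by (simp add: filter_eq_replicate_mset)
  qed
  show "count X k = count Y k"
    using split[of X] split[of Y] assms[of k] assms[of "Suc k"] by simp
qed

text \<open>For \<open>k \<ge> 1\<close>, \<open>(j + 1) div 2 = k\<close> says \<open>j \<in> {2k-1, 2k}\<close>, and \<open>j div 2 = l\<close> says
  \<open>j \<in> {2l, 2l+1}\<close>. Odd thresholds do not split the first kind of pair, even ones not the second.\<close>

lemma image_mset_eq_if_interlaced:
  fixes a b :: "'i \<Rightarrow> nat"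
  assumes p: "p permutes I"
    and odd_pairs: "\<And>i. i \<in> I \<Longrightarrow> (a i + 1) div 2 = (b i + 1) div 2"
    and even_pairs: "\<And>i. i \<in> I \<Longrightarrow> b i div 2 = a (p i) div 2"
  shows "image_mset b (mset_set I) = image_mset a (mset_set I)"
proof (rule nat_multiset_eqI_by_thresholds)
  fix h :: nat
  have size_eq: "size {#x \<in># image_mset b (mset_set I). x < h#}
      = size {#x \<in># image_mset f (mset_set I). x < h#}"
    if "\<And>i. i \<in> I \<Longrightarrow> b i < h \<longleftrightarrow> f i < h" for f :: "'i \<Rightarrow> nat"
  proof -
    have "{i \<in> I. b i < h} = {i \<in> I. f i < h}"
      using that by auto
    then show ?thesis
      by (cases "finite I") (simp_all add: filter_mset_image_mset)
  qed
  show "size {#x \<in># image_mset b (mset_set I). x < h#}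
      = size {#x \<in># image_mset a (mset_set I). x < h#}"
  proof (cases "even h")
    case True
    then obtain q where h: "h = 2 * q" by blast
    have "b i < h \<longleftrightarrow> (a \<circ> p) i < h" if "i \<in> I" for i
    proof -
      have "x < h \<longleftrightarrow> x div 2 < q" for x :: nat
        unfolding h by presburger
      then show ?thesis using even_pairs[OF that] by simp
    qed
    then have "size {#x \<in># image_mset b (mset_set I). x < h#}
        = size {#x \<in># image_mset (a \<circ> p) (mset_set I). x < h#}"
      by (rule size_eq)
    also have "image_mset (a \<circ> p) (mset_set I) = image_mset a (mset_set I)"
      using permutes_implies_image_mset_eq[OF p, of "a \<circ> p" a] by simp
    finally show ?thesis .
  next
    case False
    then obtain q where h: "h = 2 * q + 1" by (blast elim: oddE)
    have "b i < h \<longleftrightarrow> a i < h" if "i \<in> I" for i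
    proof -
      have "x < h \<longleftrightarrow> (x + 1) div 2 \<le> q" for x :: nat
        unfolding h by presburger
      then show ?thesis using odd_pairs[OF that] by simp
    qed
    then show ?thesis by (rule size_eq)
  qed
qed

lemma prod_gauge_invariant:
  fixes F F' l r c :: "'i \<Rightarrow> 'a::comm_monoid_mult"
  assumes p: "p permutes I" and \<tau>: "\<tau> permutes I"
    and F': "\<And>i. i \<in> I \<Longrightarrow> F' i = l i * r (p i) * c i * F i"
    and cancel: "\<And>i. i \<in> I \<Longrightarrow> l (\<tau> i) * r (\<tau> i) * c i = 1"
  shows "(\<Prod>i\<in>I. F' i) = (\<Prod>i\<in>I. F i)"
proof -
  have "(\<Prod>i\<in>I. F' i) = (\<Prod>i\<in>I. l i) * (\<Prod>i\<in>I. r (p i)) * (\<Prod>i\<in>I. c i) * (\<Prod>i\<in>I. F i)"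
    using F' by (simp add: prod.distrib)
  also have "(\<Prod>i\<in>I. r (p i)) = (\<Prod>i\<in>I. r i)"
    using prod.permute[OF p, of r] by (simp add: comp_def)
  also have "(\<Prod>i\<in>I. l i) * (\<Prod>i\<in>I. r i) = (\<Prod>i\<in>I. l (\<tau> i) * r (\<tau> i))"
    using prod.permute[OF \<tau>, of "\<lambda>i. l i * r i"] by (simp add: prod.distrib comp_def)
  also have "\<dots> * (\<Prod>i\<in>I. c i) = 1"
    using cancel by (simp add: prod.distrib[symmetric])
  finally show ?thesis by simp
qed

lemma kcomp_eq_0:
  assumes "\<And>w'. w' \<in> space M' \<Longrightarrow> A w w' * B w' v = 0"
  shows "kcomp M' A B w v = 0"
proof -
  have "(\<integral>w'. A w w' * B w' v \<partial>M') = (\<integral>w'. 0 \<partial>M')"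
    using assms by (intro Bochner_Integration.integral_cong) auto
  then show ?thesis by (simp add: kcomp_def)
qed

lemma fred_integrand_Leibniz:
  "fred_integrand K n x
    = (\<Sum>p | p permutes {..<n}. of_int (sign p) * (\<Prod>i<n. K (x i) (x (p i))))"
proof -
  have entries: "(\<Prod>i=0..<n. mat n n (\<lambda>(i, j). K (x i) (x j)) $$ (i, p i))
      = (\<Prod>i<n. K (x i) (x (p i)))" if "p permutes {..<n}" for p
    using permutes_in_image[OF that] by (auto simp: atLeast0LessThan intro: prod.cong)
  have "fred_integrand K n x = (\<Sum>p | p permutes {..<n}.
      of_int (sign p) * (\<Prod>i=0..<n. mat n n (\<lambda>(i, j). K (x i) (x j)) $$ (i, p i)))"
    unfolding fred_integrand_def Determinant.det_def by (simp add: atLeast0LessThan)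
  also have "\<dots> = (\<Sum>p | p permutes {..<n}. of_int (sign p) * (\<Prod>i<n. K (x i) (x (p i))))"
    using entries by (intro sum.cong) simp_all
  finally show ?thesis .
qed

lemma fred_integrand_eqI:
  assumes "\<And>p. p permutes {..<n} \<Longrightarrow>
      (\<Prod>i<n. K' (x i) (x (p i))) = (\<Prod>i<n. K (x i) (x (p i)))"
  shows "fred_integrand K' n x = fred_integrand K n x"
  unfolding fred_integrand_Leibniz using assms by (intro sum.cong) simp_all

lemma fred_term_cong:
  assumes "\<And>n x. (\<And>i. i < n \<Longrightarrow> x i \<in> space M) \<Longrightarrow> fred_integrand K' n x = fred_integrand K n x"
  shows "fred_term M K' = fred_term M K"
proof
  fix n
  have "(\<integral>x. fred_integrand K' n x \<partial>PiM {..<n} (\<lambda>_. M)) = (\<integral>x. fred_integrand K n x \<partial>PiM {..<n} (\<lambda>_. M))"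
    using assms by (intro Bochner_Integration.integral_cong) (auto simp: space_PiM PiE_iff)
  then show "fred_term M K' n = fred_term M K n"
    unfolding fred_term_def by simp
qed

lemma fred_welldef_cong:
  assumes "\<And>n x. (\<And>i. i < n \<Longrightarrow> x i \<in> space M) \<Longrightarrow> fred_integrand K' n x = fred_integrand K n x"
  shows "fred_welldef M K' \<longleftrightarrow> fred_welldef M K"
proof -
  have "integrable (PiM {..<n} (\<lambda>_. M)) (fred_integrand K' n)
      \<longleftrightarrow> integrable (PiM {..<n} (\<lambda>_. M)) (fred_integrand K n)" for n
    using assms by (intro Bochner_Integration.integrable_cong) (auto simp: space_PiM PiE_iff)
  then show ?thesis
    using fred_term_cong[OF assms] by (simp add: fred_welldef_def)
qed

definition block_index :: "(nat \<Rightarrow> 'a set) \<Rightarrow> nat \<Rightarrow> 'a \<Rightarrow> nat" where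
  "block_index S m w = (THE j. j \<in> {1..m} \<and> w \<in> S j)"

lemma block_index_eq:
  assumes disj: "disjoint_family_on S {1..m}" and "j \<in> {1..m}" "w \<in> S j"
  shows "block_index S m w = j"
  unfolding block_index_def
proof (rule the_equality)
  show "j \<in> {1..m} \<and> w \<in> S j"
    using assms by simp
  show "j' = j" if "j' \<in> {1..m} \<and> w \<in> S j'" for j'
  proof (rule ccontr)
    assume "j' \<noteq> j"
    then have "S j' \<inter> S j = {}"
      using disjoint_family_onD[OF disj] that assms(2) by blast
    then show False
      using that assms(3) by blast
  qed
qed

lemma block_index_mem:
  assumes "disjoint_family_on S {1..m}" "w \<in> (\<Union>j\<in>{1..m}. S j)"
  shows "block_index S m w \<in> {1..m}" and "w \<in> S (block_index S m w)"
proof -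
  obtain j where "j \<in> {1..m}" "w \<in> S j"
    using assms(2) by blast
  then show "block_index S m w \<in> {1..m}" "w \<in> S (block_index S m w)"
    using block_index_eq[OF assms(1)] by simp_all
qed

lemma mem_blk_iff_block_index:
  assumes "disjoint_family_on S {1..m}" "w \<in> (\<Union>j\<in>{1..m}. S j)"
  shows "w \<in> blk S m J \<longleftrightarrow> block_index S m w \<in> J"
proof
  assume "w \<in> blk S m J"
  then obtain j where "j \<in> J" "j \<in> {1..m}" "w \<in> S j"
    unfolding blk_def by blast
  then show "block_index S m w \<in> J"
    using block_index_eq[OF assms(1)] by simp
next
  assume "block_index S m w \<in> J"
  then show "w \<in> blk S m J"
    using block_index_mem[OF assms] unfolding blk_def by blast
qed

locale block_kernels =
  fixes m :: nat
    and S S' :: "nat \<Rightarrow> complex set"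
    and M M' :: "complex measure"
    and A B :: "complex \<Rightarrow> complex \<Rightarrow> complex"
    and lam mu lam' mu' :: "complex \<Rightarrow> complex"
  assumes disj: "disjoint_family_on S {1..m}"
    and disj': "disjoint_family_on S' {1..m}"
    and spM: "space M = (\<Union>i\<in>{1..m}. S i)"
    and spM': "space M' = (\<Union>i\<in>{1..m}. S' i)"
    and A_supp: "\<And>w w'. w \<in> space M \<Longrightarrow> w' \<in> space M' \<Longrightarrow> A w w' \<noteq> 0 \<Longrightarrow>
        (\<exists>i\<ge>1. w \<in> blk S m {2*i-1, 2*i} \<and> w' \<in> blk S' m {2*i-1, 2*i})"
    and B_supp: "\<And>w w'. w \<in> space M \<Longrightarrow> w' \<in> space M' \<Longrightarrow> B w' w \<noteq> 0 \<Longrightarrow>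
        (\<exists>i\<ge>1. w' \<in> blk S' m {2*i, 2*i+1} \<and> w \<in> blk S m {2*i, 2*i+1})"
    and prod1: "\<And>i w w'. i \<in> {1..m} \<Longrightarrow> w \<in> S i \<Longrightarrow> w' \<in> S' i \<Longrightarrow>
        lam w * mu w * lam' w' * mu' w' = 1"
begin

abbreviation idx :: "complex \<Rightarrow> nat" where "idx \<equiv> block_index S m"
abbreviation idx' :: "complex \<Rightarrow> nat" where "idx' \<equiv> block_index S' m"

abbreviation K :: "complex \<Rightarrow> complex \<Rightarrow> complex" where
  "K \<equiv> kcomp M' A B"
abbreviation K' :: "complex \<Rightarrow> complex \<Rightarrow> complex" where
  "K' \<equiv> kcomp M' (\<lambda>w w'. lam w * A w w' * lam' w') (\<lambda>w' w. mu' w' * B w' w * mu w)"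

definition link :: "complex \<Rightarrow> complex \<Rightarrow> complex \<Rightarrow> bool" where
  "link w w' v \<longleftrightarrow> w' \<in> space M' \<and> A w w' \<noteq> 0 \<and> B w' v \<noteq> 0"

lemma idx_mem:
  assumes "w \<in> space M"
  shows "idx w \<in> {1..m}" and "w \<in> S (idx w)"
  using block_index_mem[OF disj] assms spM by auto

lemma idx'_mem:
  assumes "w' \<in> space M'"
  shows "idx' w' \<in> {1..m}" and "w' \<in> S' (idx' w')"
  using block_index_mem[OF disj'] assms spM' by auto

lemma link_pairs:
  assumes "w \<in> space M" "v \<in> space M" "link w w' v"
  shows "(idx w + 1) div 2 = (idx' w' + 1) div 2" and "idx' w' div 2 = idx v div 2"
proof -
  have w': "w' \<in> space M'" and "A w w' \<noteq> 0" "B w' v \<noteq> 0"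
    using assms(3) unfolding link_def by auto
  obtain k where "k \<ge> 1" "idx w \<in> {2*k-1, 2*k}" "idx' w' \<in> {2*k-1, 2*k}"
    using A_supp[OF assms(1) w' \<open>A w w' \<noteq> 0\<close>] spM spM' assms(1) w'
    by (auto simp: mem_blk_iff_block_index[OF disj] mem_blk_iff_block_index[OF disj'])
  then show "(idx w + 1) div 2 = (idx' w' + 1) div 2" by auto
  obtain l where "idx' w' \<in> {2*l, 2*l+1}" "idx v \<in> {2*l, 2*l+1}"
    using B_supp[OF assms(2) w' \<open>B w' v \<noteq> 0\<close>] spM spM' assms(2) w'
    by (auto simp: mem_blk_iff_block_index[OF disj] mem_blk_iff_block_index[OF disj'])
  then show "idx' w' div 2 = idx v div 2" by auto
qed

lemma link_idx'_unique:
  assumes "w \<in> space M" "v \<in> space M" "link w w1 v" "link w w2 v"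
  shows "idx' w1 = idx' w2"
proof -
  have split: "j = (j + 1) div 2 + j div 2" for j :: nat
    by presburger
  show ?thesis
    using split[of "idx' w1"] split[of "idx' w2"]
      link_pairs[OF assms(1,2,3)] link_pairs[OF assms(1,2,4)] by linarith
qed

lemma lam'_mu'_const:
  assumes "j \<in> {1..m}" "y \<in> S j" "w1 \<in> S' j" "w2 \<in> S' j"
  shows "lam' w1 * mu' w1 = lam' w2 * mu' w2"
proof -
  have "(lam y * mu y) * (lam' w1 * mu' w1) = (lam y * mu y) * (lam' w2 * mu' w2)"
    using prod1[OF assms(1,2,3)] prod1[OF assms(1,2,4)] by (simp add: mult.assoc)
  moreover have "lam y * mu y \<noteq> 0"
    using prod1[OF assms(1,2,3)] by auto
  ultimately show ?thesis by simp
qed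

lemma kernels_vanish:
  assumes "\<not> (\<exists>w'. link w w' v)"
  shows "K w v = 0" and "K' w v = 0"
  using assms by (auto simp: link_def intro!: kcomp_eq_0)

lemma kernel_rescaled:
  assumes "w \<in> space M" "v \<in> space M" "link w w0 v" "y \<in> space M" "idx y = idx' w0"
  shows "K' w v = lam w * mu v * (lam' w0 * mu' w0) * K w v"
proof -
  have "lam w * A w w' * lam' w' * (mu' w' * B w' v * mu v)
      = lam w * mu v * (lam' w0 * mu' w0) * (A w w' * B w' v)" if "w' \<in> space M'" for w'
  proof (cases "link w w' v")
    case True
    have w0: "w0 \<in> space M'"
      using assms(3) by (simp add: link_def)
    have "y \<in> S (idx' w0)"
      using idx_mem(2)[OF assms(4)] assms(5) by simp
    moreover have "w' \<in> S' (idx' w0)"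
      using idx'_mem(2)[OF that] link_idx'_unique[OF assms(1,2) True assms(3)] by simp
    ultimately have same_weight: "lam' w' * mu' w' = lam' w0 * mu' w0"
      using lam'_mu'_const idx'_mem[OF w0] by blast
    have "lam w * A w w' * lam' w' * (mu' w' * B w' v * mu v)
        = lam w * mu v * (lam' w' * mu' w') * (A w w' * B w' v)"
      by (simp add: ac_simps)
    then show ?thesis
      using same_weight by simp
  next
    case False
    with that show ?thesis by (auto simp: link_def)
  qed
  then have "K' w v = (\<integral>w'. lam w * mu v * (lam' w0 * mu' w0) * (A w w' * B w' v) \<partial>M')"
    unfolding kcomp_def by (intro Bochner_Integration.integral_cong) auto
  then show ?thesis by (simp add: kcomp_def)
qed

lemma prod_kernels_eq:
  fixes n :: nat
  assumes p: "p permutes {..<n}" and x: "\<And>i. i < n \<Longrightarrow> x i \<in> space M"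
  shows "(\<Prod>i<n. K' (x i) (x (p i))) = (\<Prod>i<n. K (x i) (x (p i)))"
proof (cases "\<forall>i<n. \<exists>w'. link (x i) w' (x (p i))")
  case False
  then obtain i where i: "i < n" and no_link: "\<not> (\<exists>w'. link (x i) w' (x (p i)))" by blast
  have "(\<Prod>j<n. K' (x j) (x (p j))) = 0"
    by (rule prod_zero) (use i kernels_vanish(2)[OF no_link] in auto)
  moreover have "(\<Prod>j<n. K (x j) (x (p j))) = 0"
    by (rule prod_zero) (use i kernels_vanish(1)[OF no_link] in auto)
  ultimately show ?thesis by (simp only:)
next
  case True
  then obtain W where W: "\<And>i. i < n \<Longrightarrow> link (x i) (W i) (x (p i))" by metis
  have xp: "x (p i) \<in> space M" if "i < n" for i
    using x permutes_in_image[OF p] that by auto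
  define a where "a i = idx (x i)" for i
  define b where "b i = idx' (W i)" for i
  have pairs: "(a i + 1) div 2 = (b i + 1) div 2" "b i div 2 = a (p i) div 2" if "i < n" for i
    unfolding a_def b_def by (rule link_pairs[OF x[OF that] xp[OF that] W[OF that]])+
  have "image_mset b (mset_set {..<n}) = image_mset a (mset_set {..<n})"
    using pairs by (intro image_mset_eq_if_interlaced[OF p]) simp_all
  then obtain \<tau> where \<tau>: "\<tau> permutes {..<n}" and ba: "\<forall>i\<in>{..<n}. b i = a (\<tau> i)"
    by (rule image_mset_eq_implies_permutes[OF finite_lessThan])
  have x\<tau>: "x (\<tau> i) \<in> space M" if "i < n" for i
    using x permutes_in_image[OF \<tau>] that by auto
  show ?thesis
  proof (rule prod_gauge_invariant[OF p \<tau>, where l="\<lambda>i. lam (x i)" and r="\<lambda>i. mu (x i)"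
        and c="\<lambda>i. lam' (W i) * mu' (W i)"])
    fix i assume "i \<in> {..<n}"
    then have i: "i < n" by simp
    have same_block: "idx (x (\<tau> i)) = idx' (W i)"
      using ba i unfolding a_def b_def by simp
    show "K' (x i) (x (p i))
        = lam (x i) * mu (x (p i)) * (lam' (W i) * mu' (W i)) * K (x i) (x (p i))"
      by (rule kernel_rescaled[OF x[OF i] xp[OF i] W[OF i] x\<tau>[OF i] same_block])
    have "W i \<in> space M'"
      using W[OF i] by (simp add: link_def)
    then have "lam (x (\<tau> i)) * mu (x (\<tau> i)) * lam' (W i) * mu' (W i) = 1"
      using idx'_mem idx_mem(2)[OF x\<tau>[OF i]] same_block by (intro prod1) simp_all
    then show "lam (x (\<tau> i)) * mu (x (\<tau> i)) * (lam' (W i) * mu' (W i)) = 1"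
      by (simp add: mult.assoc)
  qed
qed

lemma fred_integrand_rescaled_eq:
  "(\<And>i. i < n \<Longrightarrow> x i \<in> space M) \<Longrightarrow> fred_integrand K' n x = fred_integrand K n x"
  by (intro fred_integrand_eqI prod_kernels_eq)

end

theorem lemma5p6:
  fixes m :: nat
    and S S' :: "nat \<Rightarrow> complex set"
    and M M' :: "complex measure"
    and A :: "complex \<Rightarrow> complex \<Rightarrow> complex"
    and B :: "complex \<Rightarrow> complex \<Rightarrow> complex"
    and lam mu lam' mu' :: "complex \<Rightarrow> complex"
  assumes disj: "disjoint_family_on S {1..m}"
    and disj': "disjoint_family_on S' {1..m}"
    and spM: "space M = (\<Union>i\<in>{1..m}. S i)"
    and spM': "space M' = (\<Union>i\<in>{1..m}. S' i)"
    and A_supp: "\<And>w w'. w \<in> space M \<Longrightarrow> w' \<in> space M' \<Longrightarrow> A w w' \<noteq> 0 \<Longrightarrow>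
        (\<exists>i\<ge>1. w \<in> blk S m {2*i-1, 2*i} \<and> w' \<in> blk S' m {2*i-1, 2*i})"
    and B_supp: "\<And>w w'. w \<in> space M \<Longrightarrow> w' \<in> space M' \<Longrightarrow> B w' w \<noteq> 0 \<Longrightarrow>
        (\<exists>i\<ge>1. w' \<in> blk S' m {2*i, 2*i+1} \<and> w \<in> blk S m {2*i, 2*i+1})"
    and prod1: "\<And>i w w'. i \<in> {1..m} \<Longrightarrow> w \<in> S i \<Longrightarrow> w' \<in> S' i \<Longrightarrow>
        lam w * mu w * lam' w' * mu' w' = 1"
    and wd: "fred_welldef M (kcomp M' A B)"
  shows "fred_welldef M (kcomp M' (\<lambda>w w'. lam w * A w w' * lam' w') (\<lambda>w' w. mu' w' * B w' w * mu w))
    \<and> fred_det M (kcomp M' A B)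
        = fred_det M (kcomp M' (\<lambda>w w'. lam w * A w w' * lam' w') (\<lambda>w' w. mu' w' * B w' w * mu w))"
proof -
  interpret block_kernels m S S' M M' A B lam mu lam' mu'
    by unfold_locales (fact disj disj' spM spM' A_supp B_supp prod1)+
  have "fred_welldef M K'"
    using wd fred_welldef_cong[OF fred_integrand_rescaled_eq] by simp
  moreover have "fred_term M K' = fred_term M K"
    by (rule fred_term_cong[OF fred_integrand_rescaled_eq])
  ultimately show ?thesis by (simp add: fred_det_def)
qed

end
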